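(* Let $n$ be odd, $k\ge3$, and let $f(x)=a_0(x)+2a_1(x)+\cdots+2^{k-1}a_{k-1}(x)$ from $\mathbb{V}_n$ to $\mathbb{Z}_{2^k}$ be gbent. Then its generalized Gray map $\psi(f):\mathbb{V}_n\times\mathbb{F}_2^{k-1}\to\mathbb{F}_2$, $\psi(f)(x,y_0,\ldots,y_{k-2})=\bigoplus_{i=0}^{k-2}a_i(x)y_i\oplus a_{k-1}(x)$, is $(k-2)$-plateaued, i.e. $\mathcal{W}_{\psi(f)}(w)\in\{0,\pm2^{\frac{n+1}{2}+k-2}\}$ for all $w\in\mathbb{V}_n\times\mathbb{F}_2^{k-1}$.
   Context: $\mathbb{V}_n$ is an $n$-dimensional $\mathbb{F}_2$-vector space with inner product $u\cdot x$; on $\mathbb{V}_n\times\mathbb{F}_2^{k-1}$ use the inner product $(u,z)\cdot(x,y)=u\cdot x\oplus z\cdot y$. $\mathcal{W}_F(w)=\sum_v(-1)^{F(v)\oplus w\cdot v}$. A Boolean function in $N$ variables is $s$-plateaued if its Walsh values lie in $\{0,\pm2^{(N+s)/2}\}$. $f$ is gbent if $|\sum_x\zeta_{2^k}^{f(x)}(-1)^{u\cdot x}|=2^{n/2}$ for all $u$, $\zeta_{2^k}=e^{2\pi i/2^k}$. *)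

theory Defs
  imports "HOL-Analysis.Analysis"
begin

definition vecs :: "nat \<Rightarrow> bool list set" where
  "vecs N = {xs. length xs = N}"

definition ip :: "bool list \<Rightarrow> bool list \<Rightarrow> bool" where
  "ip u x = odd (\<Sum>i<length u. (if u ! i \<and> x ! i then 1 else 0 :: nat))"

definition walsh :: "nat \<Rightarrow> (bool list \<Rightarrow> bool) \<Rightarrow> bool list \<Rightarrow> int" where
  "walsh N F w = (\<Sum>v\<in>vecs N. (-1::int) ^ (if F v \<noteq> ip w v then 1 else 0))"

definition plateaued :: "nat \<Rightarrow> nat \<Rightarrow> (bool list \<Rightarrow> bool) \<Rightarrow> bool" where
  "plateaued N s F \<longleftrightarrow> (\<forall>w\<in>vecs N. real_of_int (walsh N F w) \<in>
      {0, 2 powr ((real N + real s) / 2), - (2 powr ((real N + real s) / 2))})"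

text \<open>Generalized bent: f : V_n \<rightarrow> Z_{2^k} (values taken as naturals below 2^k).\<close>
definition gbent :: "nat \<Rightarrow> nat \<Rightarrow> (bool list \<Rightarrow> nat) \<Rightarrow> bool" where
  "gbent n k f \<longleftrightarrow> (\<forall>u\<in>vecs n.
     cmod (\<Sum>x\<in>vecs n. (cis (2 * pi / 2 ^ k)) ^ (f x) * (-1) ^ (if ip u x then 1 else 0))
       = 2 powr (real n / 2))"

definition digit :: "(bool list \<Rightarrow> nat) \<Rightarrow> nat \<Rightarrow> bool list \<Rightarrow> bool" where
  "digit f i x = odd (f x div 2 ^ i)"

text \<open>Generalized Gray map psi(f) on V_n x F_2^(k-1), where a pair (x,y) is represented by the
  concatenation x @ y (so the product inner product is the standard one on length n+k-1 lists).\<close>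
definition gray :: "nat \<Rightarrow> nat \<Rightarrow> (bool list \<Rightarrow> nat) \<Rightarrow> bool list \<Rightarrow> bool" where
  "gray n k f v = (odd (\<Sum>i<k - 1. (if digit f i (take n v) \<and> v ! (n + i) then 1 else 0 :: nat))
                    \<noteq> digit f (k - 1) (take n v))"

end

theory Submission
  imports Defs "HOL-Computational_Algebra.Polynomial_Factorial"
begin

text \<open>Let \<open>zeta = exp (2 pi i / 2^k)\<close> and \<open>M = 2^(k-1)\<close>. Summing out the \<open>y\<close>-variables, the
  Walsh coefficient of \<open>psi(f)\<close> at \<open>(u, z)\<close> is \<open>2^(k-1)\<close> times the sum of
  \<open>(-1)^(a_(k-1)(x) + u.x)\<close> over a fibre \<open>f(x) = c (mod M)\<close>, and these fibre sums are exactly the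
  coordinates of the gbent sum \<open>H = \<Sum>x. zeta^f(x) (-1)^(u.x)\<close> in the basis \<open>1, zeta, ..., zeta^(M-1)\<close>
  of \<open>Z[zeta]\<close>. For odd \<open>n = 2h + 1\<close> the norm \<open>H * cnj H = 2^n\<close> has odd exponent; since \<open>2\<close> is
  totally ramified, \<open>(2) = (1 - zeta)^M\<close>, this forces \<open>H = 2^h w\<close> with \<open>w * cnj w = 2\<close>. All Galois
  conjugates of \<open>w\<close> then have norm \<open>2\<close> as well, so by Parseval the squares of the coordinates of
  \<open>w\<close> sum to \<open>2\<close>: each coordinate lies in \<open>{-1, 0, 1}\<close>.\<close>

section \<open>Irreducibility of \<open>X^(2^j) + 1\<close> over the integers\<close>

lemma X_minus_1_power_two_power_mod_2:
  "\<exists>T. [:-1, 1::int:] ^ 2 ^ i = monom 1 (2 ^ i) + 1 + (T + T)"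
proof (induction i)
  case 0
  have "[:-1, 1::int:] = [:0, 1:] + 1 + ([:-1:] + [:-1:])" by (simp add: one_pCons)
  thus ?case by (intro exI[of _ "[:-1:]"]) (simp add: monom_Suc)
next
  case (Suc i)
  then obtain T where T: "[:-1, 1::int:] ^ 2 ^ i = monom 1 (2 ^ i) + 1 + (T + T)" by blast
  let ?X = "monom (1::int) (2 ^ i)"
  have "[:-1, 1::int:] ^ 2 ^ Suc i = ([:-1, 1:] ^ 2 ^ i) * ([:-1, 1:] ^ 2 ^ i)"
    by (simp add: power_mult[symmetric] mult_2 power_add)
  also have "\<dots> = ?X * ?X + 1 + ((?X + (T + T) * (?X + 1) + (T + T) * T)
                                  + (?X + (T + T) * (?X + 1) + (T + T) * T))"
    unfolding T by (simp add: algebra_simps)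
  also have "?X * ?X = monom 1 (2 ^ Suc i)" by (simp add: mult_monom mult_2)
  finally show ?case by blast
qed

lemma odd_inner_coeff_of_product:
  fixes G H :: "int poly"
  assumes lc: "lead_coeff (G * H) = 1" and "1 \<le> degree G" "1 \<le> degree H"
    and G0: "even (coeff G 0)" and H0: "odd (coeff H 0)"
  shows "\<exists>i. 0 < i \<and> i < degree (G * H) \<and> odd (coeff (G * H) i)"
proof -
  have "G \<noteq> 0" "H \<noteq> 0" using assms by auto
  hence deg: "degree (G * H) = degree G + degree H" by (rule degree_mult_eq)
  have "lead_coeff G * lead_coeff H = 1" using lc by (simp add: lead_coeff_mult)
  hence "odd (lead_coeff G)" by (metis even_mult_iff odd_one)
  define r where "r = (LEAST i. odd (coeff G i))"
  have r_odd: "odd (coeff G r)" unfolding r_def by (rule LeastI) fact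
  have "r \<le> degree G" unfolding r_def by (rule Least_le) fact
  have below: "even (coeff G i)" if "i < r" for i using that not_less_Least unfolding r_def by blast
  have "0 < r" using r_odd G0 by (cases r) auto
  have "coeff (G * H) r = (\<Sum>i<r. coeff G i * coeff H (r - i)) + coeff G r * coeff H 0"
    by (simp add: coeff_mult lessThan_Suc_atMost[symmetric])
  moreover have "even (\<Sum>i<r. coeff G i * coeff H (r - i))" by (rule dvd_sum) (simp add: below)
  ultimately have "odd (coeff (G * H) r)" using r_odd H0 by simp
  moreover have "r < degree (G * H)" using \<open>r \<le> degree G\<close> deg assms(3) by linarith
  ultimately show ?thesis using \<open>0 < r\<close> by blast
qed

lemma Eisenstein_at_two:
  fixes G H :: "int poly"
  assumes lc: "lead_coeff (G * H) = 1" and c0: "coeff (G * H) 0 = 2"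
    and inner: "\<And>i. 0 < i \<Longrightarrow> i < degree (G * H) \<Longrightarrow> even (coeff (G * H) i)"
  shows "degree G = 0 \<or> degree H = 0"
proof (rule ccontr)
  assume "\<not> ?thesis"
  hence deg: "1 \<le> degree G" "1 \<le> degree H" by auto
  have prod: "coeff G 0 * coeff H 0 = 2" using c0 by (simp add: coeff_mult)
  have "\<not> (even (coeff G 0) \<and> even (coeff H 0))"
    using prod mult_dvd_mono[of 2 "coeff G 0" 2 "coeff H 0"] by auto
  moreover have "\<not> (odd (coeff G 0) \<and> odd (coeff H 0))"
    using prod by (metis even_mult_iff even_numeral)
  ultimately consider "even (coeff G 0)" "odd (coeff H 0)" | "even (coeff H 0)" "odd (coeff G 0)"
    by blast
  thus False
  proof cases
    case 1
    with odd_inner_coeff_of_product[OF lc deg] inner show False by blast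
  next
    case 2
    with odd_inner_coeff_of_product[of H G] lc deg inner show False by (auto simp: mult.commute)
  qed
qed

lemma pcompose_power: "pcompose (p ^ n) q = pcompose p q ^ n"
  by (induction n) (simp_all add: pcompose_1 pcompose_mult)

lemma monom_1_eq_X_power: "monom (1::'a::comm_semiring_1) n = [:0, 1:] ^ n"
  by (induction n) (simp_all add: monom_Suc monom_0)

lemma is_unit_if_degree_0:
  fixes p :: "int poly"
  assumes "degree p = 0" "lead_coeff p * c = 1"
  shows "is_unit p"
proof -
  obtain a where "p = [:a:]" using assms(1) by (metis degree_eq_zeroE)
  moreover have "a dvd 1" using assms(2) \<open>p = [:a:]\<close> by (metis dvd_triv_left lead_coeff_pCons(2))
  ultimately show ?thesis by (simp add: is_unit_poly_iff)
qed

text \<open>Eisenstein's criterion at 2 applies after the shift \<open>X \<mapsto> X - 1\<close>.\<close>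
lemma irreducible_X_power_two_power_plus_1:
  assumes "1 \<le> j"
  shows "irreducible (monom (1::int) (2 ^ j) + 1)"
proof -
  define M :: nat where "M = 2 ^ j"
  have "2 \<le> M" "even M"
    unfolding M_def using assms power_increasing[OF assms, of "2::nat"] by (auto simp: Suc_le_eq)
  define D where "D = monom (1::int) M + 1"
  define E where "E = pcompose D [:-1, 1:]"
  have degD: "degree D = M" and lcD: "lead_coeff D = 1"
    unfolding D_def using \<open>2 \<le> M\<close> by (simp_all add: degree_add_eq_left degree_monom_eq coeff_1)
  obtain T where T: "[:-1, 1::int:] ^ M = monom 1 M + 1 + (T + T)"
    using X_minus_1_power_two_power_mod_2[of j] unfolding M_def by blast
  have E: "E = [:-1, 1:] ^ M + 1"
    unfolding E_def D_def by (simp add: pcompose_add pcompose_1 monom_1_eq_X_power pcompose_power pcompose_pCons)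
  have degP: "degree ([:-1, 1::int:] ^ M) = M" by (simp add: degree_power_eq)
  have lcP: "lead_coeff ([:-1, 1::int:] ^ M) = 1" by (simp only: lead_coeff_power) simp
  have degE: "degree E = M" unfolding E using degP \<open>2 \<le> M\<close> by (simp add: degree_add_eq_left)
  have lcE: "lead_coeff E = 1" using degE unfolding E using lcP degP \<open>2 \<le> M\<close> by simp
  have c0E: "coeff E 0 = 2"
    unfolding E using \<open>even M\<close> by (simp add: poly_0_coeff_0[symmetric])
  have innerE: "even (coeff E i)" if "0 < i" "i < degree E" for i
  proof -
    have "coeff E i = coeff (monom 1 M) i + coeff 1 i + (coeff T i + coeff T i) + coeff 1 i"
      unfolding E T by (simp only: coeff_add)
    thus ?thesis using that degE by (simp add: coeff_monom coeff_1)
  qed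
  show ?thesis unfolding M_def[symmetric] D_def[symmetric]
  proof (rule irreducibleI)
    show "D \<noteq> 0" "\<not> is_unit D" using degD \<open>2 \<le> M\<close> by (auto simp: is_unit_poly_iff)
    fix a b assume ab: "D = a * b"
    have lab: "lead_coeff a * lead_coeff b = 1" using lcD by (simp add: ab lead_coeff_mult)
    have "pcompose a [:-1, 1:] * pcompose b [:-1, 1:] = E" unfolding E_def ab by (simp add: pcompose_mult)
    hence "degree (pcompose a [:-1, 1::int:]) = 0 \<or> degree (pcompose b [:-1, 1::int:]) = 0"
      using Eisenstein_at_two innerE lcE c0E by metis
    hence "degree a = 0 \<or> degree b = 0" by (simp add: degree_pcompose)
    thus "is_unit a \<or> is_unit b"
      using is_unit_if_degree_0[of a] is_unit_if_degree_0[of b] lab by (metis mult.commute)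
  qed
qed

section \<open>Evaluating integer polynomials\<close>

definition ipoly :: "int poly \<Rightarrow> 'a::comm_ring_1 \<Rightarrow> 'a" where
  "ipoly p x = poly (map_poly of_int p) x"

lemma ipoly_pCons [simp]: "ipoly (pCons a p) x = of_int a + x * ipoly p x"
  by (simp add: ipoly_def map_poly_pCons)

lemma ipoly_0 [simp]: "ipoly 0 x = 0"
  by (simp add: ipoly_def)

lemma ipoly_1 [simp]: "ipoly 1 x = 1"
  by (simp add: ipoly_def)

lemma ipoly_add [simp]: "ipoly (p + q) x = ipoly p x + ipoly q x"
proof -
  have "map_poly of_int (p + q) = map_poly (of_int :: int \<Rightarrow> 'a) p + map_poly of_int q"
    by (rule poly_eqI) (simp add: coeff_map_poly)
  thus ?thesis by (simp add: ipoly_def)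
qed

lemma ipoly_mult [simp]: "ipoly (p * q) x = ipoly p x * ipoly q x"
proof -
  have "map_poly of_int (p * q) = map_poly (of_int :: int \<Rightarrow> 'a) p * map_poly of_int q"
    by (rule poly_eqI) (simp add: coeff_map_poly coeff_mult)
  thus ?thesis by (simp add: ipoly_def)
qed

lemma ipoly_uminus [simp]: "ipoly (- p) x = - ipoly p x"
  using ipoly_mult[of "[:-1:]" p x] by simp

lemma ipoly_diff [simp]: "ipoly (p - q) x = ipoly p x - ipoly q x"
  using ipoly_add[of p "- q" x] by simp

lemma ipoly_smult [simp]: "ipoly (smult c p) x = of_int c * ipoly p x"
  using ipoly_mult[of "[:c:]" p x] by simp

lemma ipoly_numeral [simp]: "ipoly (numeral n) x = numeral n"
  by (simp add: numeral_poly)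

lemma ipoly_power [simp]: "ipoly (p ^ n) x = ipoly p x ^ n"
  by (induction n) simp_all

lemma ipoly_monom [simp]: "ipoly (monom c n) x = of_int c * x ^ n"
  by (simp add: ipoly_def map_poly_monom poly_monom)

lemma ipoly_sum: "ipoly (\<Sum>i\<in>S. p i) x = (\<Sum>i\<in>S. ipoly (p i) x)"
  by (induction S rule: infinite_finite_induct) simp_all

lemma ipoly_pcompose: "ipoly (pcompose p q) x = ipoly p (ipoly q x)"
  by (induction p) (simp_all add: pcompose_pCons)

lemma ipoly_cnj: "cnj (ipoly p z) = ipoly p (cnj z)"
  by (induction p) simp_all

lemma ipoly_as_sum:
  assumes "degree p < N"
  shows "ipoly p x = (\<Sum>c<N. of_int (coeff p c) * x ^ c)"
proof -
  have "(\<Sum>c\<le>N - 1. monom (coeff p c) c) = p"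
    using assms by (intro poly_as_sum_of_monoms') simp
  moreover have "{..N - 1} = {..<N}" using assms by auto
  ultimately have "p = (\<Sum>c<N. monom (coeff p c) c)" by simp
  hence "ipoly p x = ipoly (\<Sum>c<N. monom (coeff p c) c) x" by simp
  thus ?thesis by (simp add: ipoly_sum)
qed

lemma zero_if_all_powers_of_two_dvd:
  fixes x :: int
  assumes "\<And>b. 2 ^ b dvd x"
  shows "x = 0"
proof (rule ccontr)
  assume "x \<noteq> 0"
  have "\<bar>2 ^ nat \<bar>x\<bar>\<bar> \<le> \<bar>x\<bar>" using assms \<open>x \<noteq> 0\<close> by (rule dvd_imp_le_int[rotated])
  moreover have "int (nat \<bar>x\<bar>) < 2 ^ nat \<bar>x\<bar>"
    using less_exp[of "nat \<bar>x\<bar>"] by (metis of_nat_less_iff of_nat_numeral of_nat_power)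
  ultimately show False by simp
qed

lemma cis_neq_1:
  fixes d :: int
  assumes "d \<noteq> 0" "\<bar>d\<bar> < int N"
  shows "cis (2 * pi * of_int d / real N) \<noteq> 1"
proof
  assume "cis (2 * pi * of_int d / real N) = 1"
  hence "cos (2 * pi * of_int d / real N) = 1" by (metis cis.sel(1) one_complex.sel(1))
  then obtain n :: int where "2 * pi * of_int d / real N = of_int n * 2 * pi"
    by (auto simp: cos_one_2pi_int)
  moreover have "real N > 0" using assms by simp
  ultimately have "real_of_int d = of_int n * real N" by (simp add: field_simps)
  hence d: "d = n * int N" by (metis of_int_eq_iff of_int_mult of_int_of_nat_eq)
  hence "1 \<le> \<bar>n\<bar>" using assms(1) by auto
  hence "int N \<le> \<bar>n\<bar> * int N" using mult_right_mono[of 1 "\<bar>n\<bar>" "int N"] by simp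
  hence "int N \<le> \<bar>d\<bar>" unfolding d by (simp add: abs_mult)
  thus False using assms(2) by simp
qed

section \<open>The minimal polynomial of a primitive \<open>2^(j+1)\<close>-th root of unity\<close>

locale cyclotomic_two_power =
  fixes j :: nat
  assumes one_le_j: "1 \<le> j"
begin

definition M :: nat where "M = 2 ^ j"
definition Phi :: "int poly" where "Phi = monom 1 M + 1"
definition zeta :: complex where "zeta = cis (pi / M)"

lemma two_le_M: "2 \<le> M"
  unfolding M_def using power_increasing[OF one_le_j, of "2::nat"] by simp

lemma even_M: "even M"
  unfolding M_def using one_le_j by (simp add: Suc_le_eq)

lemma degree_Phi: "degree Phi = M"
  unfolding Phi_def using two_le_M by (simp add: degree_add_eq_left degree_monom_eq)

lemma monic_Phi: "lead_coeff Phi = 1"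
  using degree_Phi two_le_M unfolding Phi_def by (simp add: coeff_1)

lemma Phi_nonzero: "Phi \<noteq> 0"
  using degree_Phi two_le_M by auto

lemma prime_elem_Phi: "prime_elem Phi"
  unfolding Phi_def M_def
  using irreducible_X_power_two_power_plus_1[OF one_le_j] by (simp add: irreducible_imp_prime_elem)

lemma zeta_power: "zeta ^ n = cis (real n * (pi / M))"
  unfolding zeta_def by (simp only: Complex.DeMoivre)

lemma zeta_power_M: "zeta ^ M = -1"
  using two_le_M by (simp add: zeta_power)

lemma zeta_power_2M: "zeta ^ (2 * M) = 1"
  unfolding mult.commute[of 2] power_mult zeta_power_M by simp

lemma zeta_neq_1: "zeta \<noteq> 1"
  using zeta_power_M by auto

lemma zeta_power_2M_minus_1: "zeta ^ (2 * M - 1) * zeta = 1"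
proof -
  have "Suc (2 * M - 1) = 2 * M" using two_le_M by simp
  thus ?thesis using zeta_power_2M by (metis power_Suc2)
qed

lemma cnj_zeta: "cnj zeta = zeta ^ (2 * M - 1)"
proof -
  have "zeta ^ (2 * M - 1) = inverse zeta"
    using zeta_power_2M_minus_1 by (simp add: field_simps zeta_def)
  thus ?thesis by (simp add: zeta_def cis_cnj)
qed

lemma ipoly_Phi_at_odd_power:
  assumes "odd l"
  shows "ipoly Phi (zeta ^ l) = 0"
proof -
  have "(zeta ^ l) ^ M = (zeta ^ M) ^ l" by (simp add: power_mult[symmetric] mult.commute)
  thus ?thesis using assms unfolding Phi_def by (simp add: zeta_power_M)
qed

lemma ipoly_Phi_zeta: "ipoly Phi zeta = 0"
  using ipoly_Phi_at_odd_power[of 1] by simp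

text \<open>\<open>Phi\<close> is the minimal polynomial of \<open>zeta\<close>: a root of smaller degree would, by pseudo-division
  of \<open>Phi\<close>, give a proper factor of the prime \<open>Phi\<close>.\<close>
lemma M_le_degree_if_root:
  assumes "T \<noteq> 0" "ipoly T zeta = 0"
  shows "M \<le> degree T"
  using assms
proof (induction "degree T" arbitrary: T rule: less_induct)
  case less
  show ?case
  proof (rule ccontr)
    assume small: "\<not> M \<le> degree T"
    obtain a q where "a \<noteq> 0" and eq: "smult a Phi = T * q + pseudo_mod Phi T"
      using pseudo_mod(1)[OF less.prems(1)] by blast
    have "pseudo_mod Phi T = 0"
    proof (rule ccontr)
      assume r: "pseudo_mod Phi T \<noteq> 0"
      hence "degree (pseudo_mod Phi T) < degree T" using pseudo_mod(2)[OF less.prems(1)] by blast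
      moreover have "ipoly (pseudo_mod Phi T) zeta = 0"
        using arg_cong[OF eq, of "\<lambda>p. ipoly p zeta"] less.prems(2) ipoly_Phi_zeta by simp
      ultimately have "M \<le> degree (pseudo_mod Phi T)" using less.hyps r by blast
      thus False using \<open>degree (pseudo_mod Phi T) < degree T\<close> small by linarith
    qed
    hence eq': "smult a Phi = T * q" using eq by simp
    hence "Phi dvd T * q" by (metis dvd_smult dvd_refl)
    hence "Phi dvd T \<or> Phi dvd q" using prime_elem_Phi by (simp add: prime_elem_dvd_mult_iff)
    thus False
    proof
      assume "Phi dvd T"
      hence "degree Phi \<le> degree T" using less.prems(1) by (rule dvd_imp_degree_le)
      thus False using small degree_Phi by simp
    next
      assume "Phi dvd q"
      then obtain q' where "q = Phi * q'" by (elim dvdE)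
      hence "[:a:] * Phi = (T * q') * Phi" using eq' by (simp add: algebra_simps)
      hence "[:a:] = T * q'" using Phi_nonzero by (metis mult_cancel_right)
      moreover have "q' \<noteq> 0" using \<open>[:a:] = T * q'\<close> \<open>a \<noteq> 0\<close> by auto
      ultimately have "degree T = 0" using less.prems(1)
        by (metis degree_pCons_0 degree_mult_eq add_is_0)
      then obtain c where "T = [:c:]" by (elim degree_eq_zeroE)
      thus False using less.prems by simp
    qed
  qed
qed

lemma Phi_dvd_if_root:
  assumes "ipoly W zeta = 0"
  shows "Phi dvd W"
proof -
  obtain a q where "a \<noteq> 0" and eq: "smult a W = Phi * q + pseudo_mod W Phi"
    using pseudo_mod(1)[OF Phi_nonzero] by blast
  have "ipoly (pseudo_mod W Phi) zeta = 0"
    using arg_cong[OF eq, of "\<lambda>p. ipoly p zeta"] assms ipoly_Phi_zeta by simp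
  moreover have "pseudo_mod W Phi = 0 \<or> degree (pseudo_mod W Phi) < M"
    using pseudo_mod(2)[OF Phi_nonzero, of W] degree_Phi by simp
  ultimately have "pseudo_mod W Phi = 0" using M_le_degree_if_root by fastforce
  hence "Phi dvd smult a W" using eq by simp
  thus ?thesis using dvd_monic[OF monic_Phi _ \<open>a \<noteq> 0\<close>] by blast
qed

lemma root_at_odd_powers:
  assumes "ipoly W zeta = 0" "odd l"
  shows "ipoly W (zeta ^ l) = 0"
proof -
  obtain Q where "W = Phi * Q" using Phi_dvd_if_root[OF assms(1)] by (elim dvdE)
  thus ?thesis using ipoly_Phi_at_odd_power[OF assms(2)] by simp
qed

lemma reduced_representative: "\<exists>q. degree q < M \<and> ipoly q zeta = ipoly p zeta"
proof -
  obtain q r where qr: "pseudo_divmod p Phi = (q, r)" by (cases "pseudo_divmod p Phi") auto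
  have "smult (lead_coeff Phi ^ (Suc (degree p) - degree Phi)) p = Phi * q + r"
    using pseudo_divmod(1)[OF Phi_nonzero qr] .
  hence "p = Phi * q + r" using monic_Phi by simp
  hence "ipoly r zeta = ipoly p zeta" using ipoly_Phi_zeta by simp
  moreover have "degree r < M"
    using pseudo_divmod(2)[OF Phi_nonzero qr] degree_Phi two_le_M by auto
  ultimately show ?thesis by blast
qed

lemma reduced_representative_unique:
  assumes "degree p < M" "degree q < M" "ipoly p zeta = ipoly q zeta"
  shows "p = q"
proof (rule ccontr)
  assume "p \<noteq> q"
  moreover have "degree (p - q) < M"
    using degree_diff_le_max[of p q] assms by simp
  ultimately show False using M_le_degree_if_root[of "p - q"] assms(3) by simp
qed

section \<open>Divisibility by \<open>1 - zeta\<close> in \<open>Z[zeta]\<close>\<close>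

definition Zzeta :: "complex set" where
  "Zzeta = range (\<lambda>p. ipoly p zeta)"

definition Zdvd :: "complex \<Rightarrow> complex \<Rightarrow> bool" where
  "Zdvd a b \<longleftrightarrow> (\<exists>w\<in>Zzeta. b = a * w)"

definition varpi :: complex where
  "varpi = 1 - zeta"

text \<open>On \<open>Zzeta\<close>, complex conjugation is the Galois automorphism \<open>zeta \<mapsto> zeta ^ (2 * M - 1)\<close>.\<close>
definition conj_poly :: "int poly \<Rightarrow> int poly" where
  "conj_poly p = pcompose p (monom 1 (2 * M - 1))"

lemma ipoly_in_Zzeta [simp, intro]: "ipoly p zeta \<in> Zzeta"
  unfolding Zzeta_def by blast

lemma ZzetaE:
  assumes "z \<in> Zzeta"
  obtains p where "z = ipoly p zeta"
  using assms unfolding Zzeta_def by blast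

lemma Zzeta_add [simp, intro]: "a \<in> Zzeta \<Longrightarrow> b \<in> Zzeta \<Longrightarrow> a + b \<in> Zzeta"
  by (metis ZzetaE ipoly_add ipoly_in_Zzeta)

lemma Zzeta_diff [simp, intro]: "a \<in> Zzeta \<Longrightarrow> b \<in> Zzeta \<Longrightarrow> a - b \<in> Zzeta"
  by (metis ZzetaE ipoly_diff ipoly_in_Zzeta)

lemma Zzeta_mult [simp, intro]: "a \<in> Zzeta \<Longrightarrow> b \<in> Zzeta \<Longrightarrow> a * b \<in> Zzeta"
  by (metis ZzetaE ipoly_mult ipoly_in_Zzeta)

lemma Zzeta_uminus [simp, intro]: "a \<in> Zzeta \<Longrightarrow> - a \<in> Zzeta"
  by (metis ZzetaE ipoly_uminus ipoly_in_Zzeta)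

lemma Zzeta_of_int [simp, intro]: "of_int c \<in> Zzeta"
  using ipoly_in_Zzeta[of "[:c:]"] by simp

lemma Zzeta_0 [simp, intro]: "0 \<in> Zzeta"
  using Zzeta_of_int[of 0] by simp

lemma Zzeta_1 [simp, intro]: "1 \<in> Zzeta"
  using Zzeta_of_int[of 1] by simp

lemma Zzeta_power [simp, intro]: "a \<in> Zzeta \<Longrightarrow> a ^ n \<in> Zzeta"
  by (induction n) simp_all

lemma zeta_in_Zzeta [simp, intro]: "zeta \<in> Zzeta"
  using ipoly_in_Zzeta[of "monom 1 1"] by simp

lemma varpi_in_Zzeta [simp, intro]: "varpi \<in> Zzeta"
  unfolding varpi_def by simp

lemma Zzeta_sum [intro]: "(\<And>i. i \<in> S \<Longrightarrow> f i \<in> Zzeta) \<Longrightarrow> (\<Sum>i\<in>S. f i) \<in> Zzeta"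
  by (induction S rule: infinite_finite_induct) auto

lemma ipoly_conj_poly: "ipoly (conj_poly p) (zeta ^ l) = cnj (ipoly p (zeta ^ l))"
proof -
  have "(zeta ^ l) ^ (2 * M - 1) = cnj (zeta ^ l)"
    by (simp add: cnj_zeta power_mult[symmetric] mult.commute)
  thus ?thesis by (simp add: conj_poly_def ipoly_pcompose ipoly_cnj)
qed

lemma poly_conj_poly_at_1: "poly (conj_poly p) 1 = poly p 1"
  by (simp add: conj_poly_def poly_pcompose poly_monom)

lemma Zzeta_cnj [simp, intro]: "a \<in> Zzeta \<Longrightarrow> cnj a \<in> Zzeta"
  by (metis ZzetaE ipoly_conj_poly power_one_right ipoly_in_Zzeta)

lemma ZdvdI [intro]: "w \<in> Zzeta \<Longrightarrow> b = a * w \<Longrightarrow> Zdvd a b"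
  unfolding Zdvd_def by blast

lemma ZdvdE:
  assumes "Zdvd a b"
  obtains w where "w \<in> Zzeta" "b = a * w"
  using assms unfolding Zdvd_def by blast

lemma Zdvd_refl [simp]: "Zdvd a a"
  by (rule ZdvdI[of 1]) simp_all

lemma Zdvd_trans [trans]: "Zdvd a b \<Longrightarrow> Zdvd b c \<Longrightarrow> Zdvd a c"
  by (metis ZdvdE ZdvdI Zzeta_mult mult.assoc)

lemma Zdvd_mult_right: "Zdvd a b \<Longrightarrow> c \<in> Zzeta \<Longrightarrow> Zdvd a (b * c)"
  by (metis ZdvdE ZdvdI Zzeta_mult mult.assoc)

lemma Zdvd_mult: "Zdvd a b \<Longrightarrow> Zdvd c d \<Longrightarrow> Zdvd (a * c) (b * d)"
  by (elim ZdvdE, rule ZdvdI[OF Zzeta_mult]) (assumption, assumption, simp add: algebra_simps)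

lemma Zdvd_power: "Zdvd a b \<Longrightarrow> Zdvd (a ^ n) (b ^ n)"
  by (induction n) (simp_all add: Zdvd_mult)

lemma Zdvd_add: "Zdvd a b \<Longrightarrow> Zdvd a c \<Longrightarrow> Zdvd a (b + c)"
  by (elim ZdvdE, rule ZdvdI[OF Zzeta_add]) (assumption, assumption, simp add: algebra_simps)

lemma Zdvd_diff: "Zdvd a b \<Longrightarrow> Zdvd a c \<Longrightarrow> Zdvd a (b - c)"
  by (elim ZdvdE, rule ZdvdI[OF Zzeta_diff]) (assumption, assumption, simp add: algebra_simps)

lemma Zdvd_power_le: "a \<in> Zzeta \<Longrightarrow> m \<le> n \<Longrightarrow> Zdvd (a ^ m) (a ^ n)"
  by (rule ZdvdI[of "a ^ (n - m)"]) (simp_all add: power_add[symmetric])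

lemma Zdvd_cancel_left: "Zdvd (c * a) (c * b) \<Longrightarrow> c \<noteq> 0 \<Longrightarrow> Zdvd a b"
  by (elim ZdvdE) (auto simp: mult.assoc)

lemma Zdvd_one_diff_power: "x \<in> Zzeta \<Longrightarrow> Zdvd (1 - x) (1 - x ^ n)"
  by (rule ZdvdI[of "\<Sum>i<n. x ^ i"]) (auto simp: one_diff_power_eq)

lemma varpi_Zdvd_two: "Zdvd varpi 2"
  using Zdvd_one_diff_power[OF zeta_in_Zzeta, of M] by (simp add: zeta_power_M varpi_def)

lemma even_if_varpi_Zdvd_of_int:
  assumes "Zdvd varpi (of_int m)"
  shows "even m"
proof -
  obtain w where "w \<in> Zzeta" "of_int m = varpi * w" using assms by (rule ZdvdE)
  then obtain B where B: "of_int m = varpi * ipoly B zeta" by (metis ZzetaE)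
  have "ipoly ([:m:] - [:1, -1:] * B) zeta = 0" using B by (simp add: varpi_def algebra_simps)
  then obtain Q where "[:m:] - [:1, -1:] * B = Phi * Q" using Phi_dvd_if_root by blast
  hence "poly ([:m:] - [:1, -1:] * B) 1 = poly Phi 1 * poly Q 1" by simp
  moreover have "poly Phi 1 = 2" by (simp add: Phi_def poly_monom)
  ultimately show ?thesis by simp
qed

lemma varpi_Zdvd_ipoly_minus_value_at_1: "Zdvd varpi (ipoly p zeta - of_int (poly p 1))"
proof -
  have "[:-1, 1:] dvd p - [:poly p 1:]" using poly_eq_0_iff_dvd[of "p - [:poly p 1:]" 1] by simp
  then obtain Q where "p - [:poly p 1:] = [:-1, 1:] * Q" by (elim dvdE)
  hence "ipoly (p - [:poly p 1:]) zeta = ipoly ([:-1, 1:] * Q) zeta" by simp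
  hence "ipoly p zeta - of_int (poly p 1) = varpi * ipoly (- Q) zeta"
    by (simp add: varpi_def algebra_simps)
  thus ?thesis by blast
qed

lemma varpi_Zdvd_ipoly_iff: "Zdvd varpi (ipoly p zeta) \<longleftrightarrow> even (poly p 1)"
proof
  assume "Zdvd varpi (ipoly p zeta)"
  from Zdvd_diff[OF this varpi_Zdvd_ipoly_minus_value_at_1[of p]]
  show "even (poly p 1)" by (intro even_if_varpi_Zdvd_of_int) simp
next
  assume "even (poly p 1)"
  then obtain c where "poly p 1 = 2 * c" by (elim evenE)
  hence "Zdvd varpi (of_int (poly p 1))" using Zdvd_mult_right[OF varpi_Zdvd_two, of "of_int c"] by simp
  from Zdvd_add[OF varpi_Zdvd_ipoly_minus_value_at_1[of p] this] show "Zdvd varpi (ipoly p zeta)" by simp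
qed

lemma varpi_Zdvd_mult_iff:
  assumes "a \<in> Zzeta" "b \<in> Zzeta"
  shows "Zdvd varpi (a * b) \<longleftrightarrow> Zdvd varpi a \<or> Zdvd varpi b"
proof -
  obtain p q where "a = ipoly p zeta" "b = ipoly q zeta" using assms by (metis ZzetaE)
  thus ?thesis using varpi_Zdvd_ipoly_iff[of "p * q"] by (simp add: varpi_Zdvd_ipoly_iff)
qed

lemma varpi_Zdvd_power_iff:
  assumes "a \<in> Zzeta"
  shows "Zdvd varpi (a ^ n) \<longleftrightarrow> n \<noteq> 0 \<and> Zdvd varpi a"
proof -
  obtain p where "a = ipoly p zeta" using assms by (rule ZzetaE)
  thus ?thesis using varpi_Zdvd_ipoly_iff[of "p ^ n"] by (auto simp: varpi_Zdvd_ipoly_iff poly_power)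
qed

lemma varpi_Zdvd_cnj_iff:
  assumes "a \<in> Zzeta"
  shows "Zdvd varpi (cnj a) \<longleftrightarrow> Zdvd varpi a"
proof -
  obtain p where "a = ipoly p zeta" using assms by (rule ZzetaE)
  moreover have "cnj (ipoly p zeta) = ipoly (conj_poly p) zeta"
    using ipoly_conj_poly[of p 1] by simp
  ultimately show ?thesis by (simp add: varpi_Zdvd_ipoly_iff poly_conj_poly_at_1)
qed

text \<open>\<open>cnj varpi\<close> and \<open>varpi\<close> are associates: \<open>1 - zeta\<inverse> = - zeta\<inverse> * (1 - zeta)\<close>.\<close>
lemma cnj_varpi: "cnj varpi = - (zeta ^ (2 * M - 1)) * varpi"
  using zeta_power_2M_minus_1 by (simp add: varpi_def cnj_zeta algebra_simps)

lemma not_varpi_Zdvd_minus_zeta_power: "\<not> Zdvd varpi (- (zeta ^ n))"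
  using varpi_Zdvd_ipoly_iff[of "- monom 1 n"] by (simp add: poly_monom)

lemma two_Zdvd_varpi_power_M: "Zdvd 2 (varpi ^ M)"
proof -
  obtain T where T: "[:-1, 1::int:] ^ M = monom 1 M + 1 + (T + T)"
    using X_minus_1_power_two_power_mod_2[of j] unfolding M_def by blast
  have "(zeta - 1) ^ M = ipoly ([:-1, 1::int:] ^ M) zeta" by (simp add: mult.commute)
  also have "\<dots> = zeta ^ M + 1 + 2 * ipoly T zeta" unfolding T by simp
  finally have "(zeta - 1) ^ M = 2 * ipoly T zeta" by (simp add: zeta_power_M)
  moreover have "varpi ^ M = (zeta - 1) ^ M"
    using power_minus_even[OF even_M, of "zeta - 1"] by (simp add: varpi_def)
  ultimately show ?thesis by auto
qed

text \<open>For \<open>i < j\<close>, \<open>1 - zeta ^ 2 ^ i\<close> divides \<open>1 - zeta ^ M = 2\<close>, so every divisor of it also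
  divides \<open>1 + zeta ^ 2 ^ i = 2 - (1 - zeta ^ 2 ^ i)\<close>.\<close>
lemma varpi_power_Zdvd: "i \<le> j \<Longrightarrow> Zdvd (varpi ^ 2 ^ i) (1 - zeta ^ 2 ^ i)"
proof (induction i)
  case 0
  show ?case by (simp add: varpi_def)
next
  case (Suc i)
  define q where "q = zeta ^ 2 ^ i"
  have IH: "Zdvd (varpi ^ 2 ^ i) (1 - q)" using Suc unfolding q_def by simp
  have "i + (j - i) = j" using Suc.prems by simp
  hence "(2::nat) ^ i * 2 ^ (j - i) = M" unfolding M_def by (metis power_add)
  hence "q ^ 2 ^ (j - i) = -1" unfolding q_def by (metis power_mult zeta_power_M)
  hence "Zdvd (1 - q) 2" using Zdvd_one_diff_power[of q "2 ^ (j - i)"] by (simp add: q_def)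
  from Zdvd_diff[OF Zdvd_trans[OF IH this] IH]
  have "Zdvd (varpi ^ 2 ^ i * varpi ^ 2 ^ i) ((1 - q) * (2 - (1 - q)))" using IH by (intro Zdvd_mult)
  moreover have "(1 - q) * (2 - (1 - q)) = 1 - q * q" by (simp add: algebra_simps)
  moreover have "2 ^ Suc i = 2 ^ i + (2::nat) ^ i" by simp
  hence "q * q = zeta ^ 2 ^ Suc i" "varpi ^ 2 ^ i * varpi ^ 2 ^ i = varpi ^ 2 ^ Suc i"
    unfolding q_def by (metis power_add)+
  ultimately show ?case by simp
qed

lemma varpi_power_M_Zdvd_two: "Zdvd (varpi ^ M) 2"
  using varpi_power_Zdvd[of j] zeta_power_M by (simp add: M_def)

lemma zero_if_all_powers_of_two_Zdvd:
  assumes "z \<in> Zzeta" "\<And>b. Zdvd (2 ^ b) z"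
  shows "z = 0"
proof -
  obtain p where p: "degree p < M" "z = ipoly p zeta"
    using assms(1) reduced_representative by (metis ZzetaE)
  have "2 ^ b dvd coeff p i" for b i
  proof -
    obtain w where "w \<in> Zzeta" "z = 2 ^ b * w" using assms(2) by (rule ZdvdE)
    then obtain q where q: "degree q < M" "z = 2 ^ b * ipoly q zeta"
      using reduced_representative by (metis ZzetaE)
    have "ipoly p zeta = ipoly (smult (2 ^ b) q) zeta" using p q by simp
    hence "p = smult (2 ^ b) q"
      using reduced_representative_unique p(1) q(1) degree_smult_le[of "2 ^ b" q] by simp
    thus ?thesis by simp
  qed
  hence "p = 0" using zero_if_all_powers_of_two_dvd by (auto simp: poly_eq_iff)
  thus ?thesis using p by simp
qed

lemma varpi_adic_decomposition:
  assumes "z \<in> Zzeta" "z \<noteq> 0"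
  shows "\<exists>a w. w \<in> Zzeta \<and> z = varpi ^ a * w \<and> \<not> Zdvd varpi w"
proof (rule ccontr)
  assume none: "\<not> ?thesis"
  have all: "Zdvd (varpi ^ a) z" for a
  proof (induction a)
    case 0
    show ?case using assms(1) by (intro ZdvdI[of z]) simp_all
  next
    case (Suc a)
    then obtain w where w: "w \<in> Zzeta" "z = varpi ^ a * w" by (rule ZdvdE)
    hence "Zdvd varpi w" using none by blast
    then obtain w' where "w' \<in> Zzeta" "w = varpi * w'" by (rule ZdvdE)
    thus ?case using w(2) by (intro ZdvdI[of w']) (simp_all add: algebra_simps)
  qed
  have "Zdvd (2 ^ b) z" for b
  proof -
    have "Zdvd (2 ^ b) (varpi ^ (M * b))"
      using Zdvd_power[OF two_Zdvd_varpi_power_M, of b] by (simp add: power_mult)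
    thus ?thesis using all by (rule Zdvd_trans)
  qed
  thus False using zero_if_all_powers_of_two_Zdvd assms by blast
qed

text \<open>Write \<open>z = varpi ^ a * w\<close> with \<open>w\<close> prime to \<open>varpi\<close>. Since \<open>cnj varpi\<close> is an associate of
  \<open>varpi\<close>, the norm \<open>2 ^ m\<close> is \<open>varpi ^ (2 * a)\<close> times a unit mod \<open>varpi\<close>, while \<open>varpi ^ M\<close>
  divides \<open>2\<close>; this forces \<open>M \<le> a\<close>, and \<open>2\<close> divides \<open>varpi ^ M\<close>.\<close>
lemma two_Zdvd_if_norm_power_two:
  assumes "z \<in> Zzeta" "z * cnj z = 2 ^ m" "2 \<le> m"
  shows "Zdvd 2 z"
proof -
  have "z \<noteq> 0" using assms(2) by auto
  then obtain a w where w: "w \<in> Zzeta" "z = varpi ^ a * w" "\<not> Zdvd varpi w"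
    using varpi_adic_decomposition assms(1) by blast
  define eps where "eps = - (zeta ^ (2 * M - 1))"
  define u where "u = eps ^ a * (w * cnj w)"
  have u_prime: "\<not> Zdvd varpi u"
    using w(1,3) by (simp add: u_def eps_def varpi_Zdvd_mult_iff varpi_Zdvd_power_iff varpi_Zdvd_cnj_iff
        not_varpi_Zdvd_minus_zeta_power)
  have "cnj z = (eps * varpi) ^ a * cnj w" unfolding w(2) by (simp add: cnj_varpi eps_def)
  hence "z * cnj z = (varpi ^ a * w) * ((eps * varpi) ^ a * cnj w)" using w(2) by metis
  also have "\<dots> = (varpi ^ a * varpi ^ a) * u" unfolding u_def by (simp add: power_mult_distrib algebra_simps)
  finally have "z * cnj z = (varpi ^ a * varpi ^ a) * u" .
  hence norm: "z * cnj z = varpi ^ (2 * a) * u" by (simp only: mult_2 power_add)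
  have "M \<le> a"
  proof (rule ccontr)
    assume "\<not> M \<le> a"
    hence "2 * a + 1 \<le> M * m" using assms(3) mult_le_mono2[of 2 m M] by linarith
    hence "Zdvd (varpi ^ (2 * a + 1)) (varpi ^ (M * m))" by (intro Zdvd_power_le) simp_all
    also have "Zdvd (varpi ^ (M * m)) (2 ^ m)"
      using Zdvd_power[OF varpi_power_M_Zdvd_two, of m] by (simp add: power_mult)
    finally have "Zdvd (varpi ^ (2 * a) * varpi) (varpi ^ (2 * a) * u)"
      using assms(2) norm by (simp only: power_add power_one_right)
    hence "Zdvd varpi u" by (rule Zdvd_cancel_left) (simp add: varpi_def zeta_neq_1)
    thus False using u_prime by simp
  qed
  hence "z = varpi ^ M * (varpi ^ (a - M) * w)" using w(2) by (simp flip: power_add)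
  thus ?thesis using Zdvd_mult_right[OF two_Zdvd_varpi_power_M, of "varpi ^ (a - M) * w"] w(1) by simp
qed

lemma norm_odd_power_of_two_descent:
  "z \<in> Zzeta \<Longrightarrow> z * cnj z = 2 ^ (2 * h + 1) \<Longrightarrow> \<exists>w\<in>Zzeta. z = 2 ^ h * w \<and> w * cnj w = 2"
proof (induction h arbitrary: z)
  case 0
  thus ?case by auto
next
  case (Suc h)
  obtain w where w: "w \<in> Zzeta" "z = 2 * w"
    using two_Zdvd_if_norm_power_two[OF Suc.prems] by (auto elim: ZdvdE)
  have "4 * (w * cnj w) = 4 * 2 ^ (2 * h + 1)" using Suc.prems(2) w(2) by simp
  hence "w * cnj w = 2 ^ (2 * h + 1)" by simp
  thus ?case using Suc.IH[OF w(1)] w(2) by auto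
qed

section \<open>Elements of norm 2\<close>

lemma odd_roots_orthogonality:
  assumes "c < M" "e < M"
  shows "(\<Sum>l<M. (zeta ^ (2 * l + 1)) ^ c * cnj ((zeta ^ (2 * l + 1)) ^ e))
           = (if c = e then of_nat M else 0)"
proof -
  define d where "d = real c - real e"
  define q where "q = cis (2 * pi * d / M)"
  have summand: "(zeta ^ (2 * l + 1)) ^ c * cnj ((zeta ^ (2 * l + 1)) ^ e) = cis (pi * d / M) * q ^ l" for l
  proof -
    have "q ^ l = cis (real l * (2 * pi * d / M))" unfolding q_def by (simp only: Complex.DeMoivre)
    moreover have "(zeta ^ (2 * l + 1)) ^ c = cis (real ((2 * l + 1) * c) * (pi / M))"
      "(zeta ^ (2 * l + 1)) ^ e = cis (real ((2 * l + 1) * e) * (pi / M))"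
      unfolding power_mult[symmetric] by (rule zeta_power)+
    ultimately show ?thesis
      by (simp add: cis_cnj cis_mult d_def algebra_simps add_divide_distrib diff_divide_distrib)
  qed
  show ?thesis
  proof (cases "c = e")
    case True
    show ?thesis unfolding summand using True by (simp add: d_def q_def)
  next
    case False
    have d: "d = of_int (int c - int e)" unfolding d_def by simp
    have "q \<noteq> 1" unfolding q_def d by (rule cis_neq_1) (use False assms in auto)
    have "q ^ M = cis (real M * (2 * pi * d / M))" unfolding q_def by (simp only: Complex.DeMoivre)
    also have "\<dots> = cis (2 * pi * of_int (int c - int e))" using two_le_M d by simp
    also have "\<dots> = 1" by (rule cis_multiple_2pi) simp
    finally have "(\<Sum>l<M. q ^ l) = 0" using sum_gp_strict[of q M] \<open>q \<noteq> 1\<close> by simp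
    thus ?thesis using False by (simp only: summand flip: sum_distrib_left) simp
  qed
qed

lemma sum_norm_at_odd_roots:
  assumes "degree B < M"
  shows "(\<Sum>l<M. ipoly B (zeta ^ (2 * l + 1)) * cnj (ipoly B (zeta ^ (2 * l + 1))))
           = of_nat M * of_int (\<Sum>c<M. coeff B c * coeff B c)"
proof -
  define b where "b c = (of_int (coeff B c) :: complex)" for c
  define w where "w l c = (zeta ^ (2 * l + 1)) ^ c" for l c
  have "(\<Sum>l<M. ipoly B (zeta ^ (2 * l + 1)) * cnj (ipoly B (zeta ^ (2 * l + 1))))
      = (\<Sum>l<M. \<Sum>c<M. \<Sum>c'<M. b c * b c' * (w l c * cnj (w l c')))"
    unfolding ipoly_as_sum[OF assms] by (simp add: sum_product b_def w_def algebra_simps)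
  also have "\<dots> = (\<Sum>c<M. \<Sum>c'<M. b c * b c' * (\<Sum>l<M. w l c * cnj (w l c')))"
    by (subst sum.swap, rule sum.cong[OF refl], subst sum.swap) (simp add: sum_distrib_left)
  also have "\<dots> = (\<Sum>c<M. \<Sum>c'<M. if c = c' then b c * b c' * of_nat M else 0)"
    unfolding w_def by (intro sum.cong refl, subst odd_roots_orthogonality) auto
  also have "\<dots> = of_nat M * (\<Sum>c<M. b c * b c)"
    by (simp add: sum_distrib_left mult.commute)
  finally show ?thesis by (simp add: b_def)
qed

lemma coeff_in_unit_range_if_norm_two:
  assumes deg: "degree B < M" and norm: "ipoly B zeta * cnj (ipoly B zeta) = 2"
  shows "coeff B c \<in> {-1, 0, 1}"
proof (cases "c < M")
  case True
  have "ipoly (B * conj_poly B - 2) zeta = 0" using norm ipoly_conj_poly[of B 1] by simp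
  hence "ipoly (B * conj_poly B - 2) (zeta ^ (2 * l + 1)) = 0" for l by (rule root_at_odd_powers) simp
  hence "ipoly B (zeta ^ (2 * l + 1)) * cnj (ipoly B (zeta ^ (2 * l + 1))) - 2 = 0" for l
    by (simp only: ipoly_diff ipoly_mult ipoly_conj_poly ipoly_numeral)
  hence "of_nat M * of_int (\<Sum>c<M. coeff B c * coeff B c) = of_nat M * (2 :: complex)"
    using sum_norm_at_odd_roots[OF deg] by (simp add: right_minus_eq)
  hence "(of_int (\<Sum>c<M. coeff B c * coeff B c) :: complex) = of_int 2" using two_le_M by simp
  hence "(\<Sum>c<M. coeff B c * coeff B c) = 2" by (simp only: of_int_eq_iff)
  hence "coeff B c * coeff B c \<le> 2" using True member_le_sum[of c "{..<M}" "\<lambda>c. coeff B c * coeff B c"]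
    by simp
  hence "\<bar>coeff B c\<bar> \<le> 1" using abs_mult_self_eq[of "coeff B c"] mult_mono[of 2 "\<bar>coeff B c\<bar>" 2 "\<bar>coeff B c\<bar>"]
    by linarith
  thus ?thesis by auto
next
  case False
  thus ?thesis using deg by (simp add: coeff_eq_0)
qed

end

section \<open>The Walsh transform of the generalized Gray map\<close>

definition sgn_bool :: "bool \<Rightarrow> int" where
  "sgn_bool b = (if b then -1 else 1)"

lemma sgn_bool_xor: "sgn_bool (P \<noteq> Q) = sgn_bool P * sgn_bool Q"
  by (simp add: sgn_bool_def)

lemma sgn_bool_and_xor: "sgn_bool (P \<and> Y) * sgn_bool (Q \<and> Y) = sgn_bool ((P \<noteq> Q) \<and> Y)"
  by (simp add: sgn_bool_def)

lemma minus_one_power_if: "(-1 :: 'a :: ring_1) ^ (if P then 1 else 0) = of_int (sgn_bool P)"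
  by (simp add: sgn_bool_def)

lemma sgn_bool_odd_count: "sgn_bool (odd (\<Sum>i<(m::nat). if P i then 1 else 0 :: nat)) = (\<Prod>i<m. sgn_bool (P i))"
proof (induction m)
  case (Suc m)
  have "sgn_bool (odd (S + x)) = sgn_bool (odd S) * sgn_bool (odd x)" for S x :: nat by (simp add: sgn_bool_def)
  moreover have "sgn_bool (odd (if P m then 1 else 0 :: nat)) = sgn_bool (P m)" by (simp add: sgn_bool_def)
  ultimately show ?case by (simp only: sum.lessThan_Suc prod.lessThan_Suc Suc.IH)
qed (simp add: sgn_bool_def)

lemma finite_vecs [simp]: "finite (vecs n)"
  unfolding vecs_def using finite_lists_length_eq[of "UNIV :: bool set" n] by simp

lemma sum_vecs_append: "(\<Sum>v\<in>vecs (n + m). F v) = (\<Sum>x\<in>vecs n. \<Sum>y\<in>vecs m. F (x @ y))"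
proof -
  have "vecs (n + m) = (\<lambda>(x, y). x @ y) ` (vecs n \<times> vecs m)"
    unfolding vecs_def by (auto intro!: image_eqI[of _ _ "(take n v, drop n v)" for v])
  moreover have "inj_on (\<lambda>(x, y). x @ y) (vecs n \<times> vecs m)"
    by (auto simp: inj_on_def vecs_def)
  ultimately have "(\<Sum>v\<in>vecs (n + m). F v) = (\<Sum>(x, y)\<in>vecs n \<times> vecs m. F (x @ y))"
    by (simp add: sum.reindex case_prod_unfold)
  thus ?thesis by (simp add: sum.cartesian_product)
qed

lemma sum_vecs_Suc: "(\<Sum>v\<in>vecs (Suc m). F v) = (\<Sum>y\<in>vecs m. F (True # y)) + (\<Sum>y\<in>vecs m. F (False # y))"
proof -
  have "vecs (Suc m) = (\<lambda>(b, y). b # y) ` (UNIV \<times> vecs m)"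
    unfolding vecs_def by (force simp: length_Suc_conv)
  moreover have "inj_on (\<lambda>(b :: bool, y). b # y) (UNIV \<times> vecs m)"
    by (auto simp: inj_on_def)
  ultimately have "(\<Sum>v\<in>vecs (Suc m). F v) = (\<Sum>(b, y)\<in>UNIV \<times> vecs m. F (b # y))"
    by (simp add: sum.reindex case_prod_unfold)
  thus ?thesis by (simp add: sum.cartesian_product[symmetric] UNIV_bool add.commute)
qed

lemma sum_vecs_prod_sgn_bool:
  "(\<Sum>y\<in>vecs m. \<Prod>i<m. sgn_bool (g i \<and> y ! i)) = (if \<forall>i<m. \<not> g i then 2 ^ m else 0)"
proof (induction m arbitrary: g)
  case 0
  have "vecs 0 = {[]}" unfolding vecs_def by auto
  thus ?case by simp
next
  case (Suc m)
  have "(\<Prod>i<Suc m. sgn_bool (g i \<and> (b # y) ! i)) = sgn_bool (g 0 \<and> b) * (\<Prod>i<m. sgn_bool (g (Suc i) \<and> y ! i))"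
    for b y by (simp only: prod.lessThan_Suc_shift nth_Cons_0 nth_Cons_Suc)
  hence "(\<Sum>y\<in>vecs (Suc m). \<Prod>i<Suc m. sgn_bool (g i \<and> y ! i))
      = (sgn_bool (g 0) + 1) * (\<Sum>y\<in>vecs m. \<Prod>i<m. sgn_bool (g (Suc i) \<and> y ! i))"
    unfolding sum_vecs_Suc by (simp add: sum_distrib_left[symmetric] sgn_bool_def algebra_simps)
  also have "\<dots> = (if \<forall>i<Suc m. \<not> g i then 2 ^ Suc m else 0)"
    unfolding Suc.IH by (auto simp: sgn_bool_def All_less_Suc2)
  finally show ?case .
qed

lemma mult_if_zero_right: "a * (if P then c else 0) = (if P then c * a else (0 :: 'a :: comm_semiring_0))"
  by (simp add: mult.commute)

lemma sum_lessThan_add: "(\<Sum>i<a + (b::nat). F i) = (\<Sum>i<a. F i) + (\<Sum>i<b. F (a + i))"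
  by (induction b) (simp_all add: add.assoc)

lemma ip_append:
  assumes "length u = length x" "length z = length y"
  shows "ip (u @ z) (x @ y) = (ip u x \<noteq> ip z y)"
proof -
  have "(\<Sum>i<length (u @ z). if (u @ z) ! i \<and> (x @ y) ! i then 1 else 0 :: nat)
      = (\<Sum>i<length u. if u ! i \<and> x ! i then 1 else 0) + (\<Sum>i<length z. if z ! i \<and> y ! i then 1 else 0)"
    using assms by (simp add: sum_lessThan_add nth_append)
  thus ?thesis unfolding ip_def by simp
qed

lemma sgn_bool_ip: "sgn_bool (ip u x) = (\<Prod>i<length u. sgn_bool (u ! i \<and> x ! i))"
  unfolding ip_def by (rule sgn_bool_odd_count)

text \<open>Summing over the \<open>y\<close>-part first, the character sum over \<open>F\<^sub>2\<^bsup>j\<^esup>\<close> vanishes unless the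
  digits \<open>a\<^sub>0(x), \<dots>, a\<^sub>j\<^sub>-\<^sub>1(x)\<close> coincide with the \<open>y\<close>-part of \<open>w\<close>.\<close>
lemma walsh_gray:
  assumes "w \<in> vecs (n + j)"
  shows "walsh (n + j) (gray n (Suc j) f) w =
     2 ^ j * (\<Sum>x | x \<in> vecs n \<and> (\<forall>i<j. digit f i x = drop n w ! i).
                sgn_bool (digit f j x) * sgn_bool (ip (take n w) x))"
proof -
  define u where "u = take n w"
  define z where "z = drop n w"
  have w: "w = u @ z" "length u = n" "length z = j"
    using assms unfolding u_def z_def vecs_def by auto
  have summand: "(-1) ^ (if gray n (Suc j) f (x @ y) \<noteq> ip w (x @ y) then 1 else 0)
      = sgn_bool (digit f j x) * sgn_bool (ip u x) * (\<Prod>i<j. sgn_bool ((digit f i x \<noteq> z ! i) \<and> y ! i))"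
    if "x \<in> vecs n" "y \<in> vecs j" for x y
  proof -
    have x: "length x = n" and y: "length y = j" using that unfolding vecs_def by auto
    have "(-1) ^ (if gray n (Suc j) f (x @ y) \<noteq> ip w (x @ y) then 1 else 0)
        = sgn_bool (gray n (Suc j) f (x @ y)) * sgn_bool (ip w (x @ y))"
      unfolding minus_one_power_if sgn_bool_xor by simp
    also have "\<dots> = (\<Prod>i<j. sgn_bool (digit f i x \<and> y ! i)) * sgn_bool (digit f j x)
                    * (sgn_bool (ip u x) * (\<Prod>i<j. sgn_bool (z ! i \<and> y ! i)))"
    proof -
      have g: "gray n (Suc j) f (x @ y) = (odd (\<Sum>i<j. if digit f i x \<and> y ! i then 1 else 0 :: nat) \<noteq> digit f j x)"
        using x by (simp add: gray_def nth_append)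
      have i: "ip w (x @ y) = (ip u x \<noteq> ip z y)" using w x y by (simp add: ip_append)
      show ?thesis unfolding g i unfolding sgn_bool_xor sgn_bool_odd_count sgn_bool_ip w(3) ..
    qed
    also have "\<dots> = sgn_bool (digit f j x) * sgn_bool (ip u x)
                    * (\<Prod>i<j. sgn_bool (digit f i x \<and> y ! i) * sgn_bool (z ! i \<and> y ! i))"
      by (simp add: prod.distrib algebra_simps)
    finally show ?thesis by (simp add: sgn_bool_and_xor)
  qed
  have "walsh (n + j) (gray n (Suc j) f) w = (\<Sum>x\<in>vecs n. \<Sum>y\<in>vecs j.
          sgn_bool (digit f j x) * sgn_bool (ip u x) * (\<Prod>i<j. sgn_bool ((digit f i x \<noteq> z ! i) \<and> y ! i)))"
    unfolding walsh_def sum_vecs_append by (intro sum.cong refl) (rule summand)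
  also have "\<dots> = (\<Sum>x\<in>vecs n. sgn_bool (digit f j x) * sgn_bool (ip u x)
                                  * (if \<forall>i<j. digit f i x = z ! i then 2 ^ j else 0))"
    by (simp add: sum_distrib_left[symmetric] sum_vecs_prod_sgn_bool)
  also have "\<dots> = (\<Sum>x\<in>vecs n. if \<forall>i<j. digit f i x = z ! i
                                then 2 ^ j * (sgn_bool (digit f j x) * sgn_bool (ip u x)) else 0)"
    by (intro sum.cong refl) (simp only: mult_if_zero_right)
  also have "\<dots> = 2 ^ j * (\<Sum>x | x \<in> vecs n \<and> (\<forall>i<j. digit f i x = z ! i).
                              sgn_bool (digit f j x) * sgn_bool (ip u x))"
    by (simp add: sum.inter_filter[symmetric] sum_distrib_left)
  finally show ?thesis unfolding u_def z_def .
qed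

lemma digits_eq_iff_mod: "(\<forall>i<j. digit f i x = digit f i x') \<longleftrightarrow> f x mod 2 ^ j = f x' mod 2 ^ j"
  unfolding digit_def bit_iff_odd[symmetric] take_bit_eq_mod[symmetric]
  by (auto simp: bit_eq_iff bit_take_bit_iff)

text \<open>Since \<open>zeta ^ f x = zeta ^ (f x mod 2 ^ j) * (-1) ^ a\<^sub>j(x)\<close>, the fibre sums below are the
  coordinates of the gbent sum in the power basis of \<open>Z[zeta]\<close>.\<close>
definition fibre_walsh :: "(bool list \<Rightarrow> nat) \<Rightarrow> nat \<Rightarrow> nat \<Rightarrow> bool list \<Rightarrow> nat \<Rightarrow> int" where
  "fibre_walsh f n j u c = (\<Sum>x | x \<in> vecs n \<and> f x mod 2 ^ j = c. sgn_bool (digit f j x) * sgn_bool (ip u x))"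

context cyclotomic_two_power
begin

lemma cis_eq_zeta: "cis (2 * pi / 2 ^ Suc j) = zeta"
  by (simp add: zeta_def M_def)

lemma zeta_power_mod_M: "zeta ^ N = zeta ^ (N mod M) * of_int (sgn_bool (odd (N div M)))"
proof -
  have "zeta ^ N = zeta ^ (N mod M) * (zeta ^ M) ^ (N div M)"
    by (metis div_mult_mod_eq add.commute power_add power_mult mult.commute)
  thus ?thesis by (simp add: zeta_power_M minus_one_power_if[symmetric])
qed

lemma gbent_sum_eq_ipoly:
  "(\<Sum>x\<in>vecs n. zeta ^ f x * (-1) ^ (if ip u x then 1 else 0))
     = ipoly (\<Sum>c<M. monom (fibre_walsh f n j u c) c) zeta"
proof -
  have "zeta ^ f x * (-1) ^ (if ip u x then 1 else 0)
      = zeta ^ (f x mod M) * of_int (sgn_bool (digit f j x) * sgn_bool (ip u x))" for x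
    by (subst zeta_power_mod_M) (simp add: digit_def M_def minus_one_power_if)
  hence "(\<Sum>x\<in>vecs n. zeta ^ f x * (-1) ^ (if ip u x then 1 else 0))
      = (\<Sum>x\<in>vecs n. zeta ^ (f x mod M) * of_int (sgn_bool (digit f j x) * sgn_bool (ip u x)))"
    by (simp only:)
  also have "\<dots> = (\<Sum>c<M. \<Sum>x | x \<in> vecs n \<and> f x mod M = c.
                 zeta ^ (f x mod M) * of_int (sgn_bool (digit f j x) * sgn_bool (ip u x)))"
    by (rule sum.group[symmetric]) (use two_le_M in auto)
  also have "\<dots> = (\<Sum>c<M. of_int (fibre_walsh f n j u c) * zeta ^ c)"
    unfolding fibre_walsh_def M_def
    by (intro sum.cong refl) (simp add: sum_distrib_left sum_distrib_right mult.commute)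
  finally show ?thesis by (simp add: ipoly_sum)
qed

lemma fibre_walsh_values:
  assumes n: "n = 2 * h + 1" and c: "c < M"
    and gbent: "cmod (\<Sum>x\<in>vecs n. zeta ^ f x * (-1) ^ (if ip u x then 1 else 0)) = 2 powr (real n / 2)"
  shows "fibre_walsh f n j u c \<in> {0, 2 ^ h, - (2 ^ h)}"
proof -
  define P where "P = (\<Sum>c<M. monom (fibre_walsh f n j u c) c)"
  have coeff_P: "coeff P i = (if i < M then fibre_walsh f n j u i else 0)" for i
    unfolding P_def by (simp add: coeff_sum coeff_monom)
  have "degree P \<le> M - 1" by (rule degree_le) (use coeff_P two_le_M in auto)
  hence deg_P: "degree P < M" using two_le_M by simp
  define z where "z = ipoly P zeta"
  have "z * cnj z = of_real ((cmod z)\<^sup>2)" by (rule complex_norm_square[symmetric])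
  also have "(cmod z)\<^sup>2 = 2 ^ n"
    using gbent gbent_sum_eq_ipoly by (simp add: z_def P_def powr_power powr_realpow)
  finally have "z * cnj z = 2 ^ (2 * h + 1)" using n by simp
  then obtain w where w: "w \<in> Zzeta" "z = 2 ^ h * w" "w * cnj w = 2"
    using norm_odd_power_of_two_descent[of z h] unfolding z_def by auto
  then obtain B where B: "degree B < M" "w = ipoly B zeta"
    using reduced_representative by (metis ZzetaE)
  have "P = smult (2 ^ h) B"
    using reduced_representative_unique[of P "smult (2 ^ h) B"] deg_P B w(2) degree_smult_le[of "2 ^ h" B]
    unfolding z_def by simp
  hence "fibre_walsh f n j u c = 2 ^ h * coeff B c" using coeff_P[of c] c by simp
  moreover have "coeff B c \<in> {-1, 0, 1}"
    using coeff_in_unit_range_if_norm_two B w(3) by blast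
  ultimately show ?thesis by auto
qed

lemma walsh_gray_values:
  assumes n: "n = 2 * h + 1" and "gbent n (Suc j) f" and w: "w \<in> vecs (n + j)"
  shows "walsh (n + j) (gray n (Suc j) f) w \<in> {0, 2 ^ (j + h), - (2 ^ (j + h))}"
proof -
  define C where "C = {x. x \<in> vecs n \<and> (\<forall>i<j. digit f i x = drop n w ! i)}"
  have walsh: "walsh (n + j) (gray n (Suc j) f) w
      = 2 ^ j * (\<Sum>x\<in>C. sgn_bool (digit f j x) * sgn_bool (ip (take n w) x))"
    unfolding C_def by (rule walsh_gray[OF w])
  show ?thesis
  proof (cases "C = {}")
    case True
    thus ?thesis using walsh by simp
  next
    case False
    then obtain x0 where "x0 \<in> C" by blast
    hence "C = {x. x \<in> vecs n \<and> f x mod 2 ^ j = f x0 mod 2 ^ j}"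
      unfolding C_def digits_eq_iff_mod[symmetric] by auto
    hence "(\<Sum>x\<in>C. sgn_bool (digit f j x) * sgn_bool (ip (take n w) x))
        = fibre_walsh f n j (take n w) (f x0 mod 2 ^ j)"
      by (simp add: fibre_walsh_def)
    moreover have "take n w \<in> vecs n" using w unfolding vecs_def by simp
    hence "cmod (\<Sum>x\<in>vecs n. zeta ^ f x * (-1) ^ (if ip (take n w) x then 1 else 0))
        = 2 powr (real n / 2)"
      using assms(2) unfolding gbent_def cis_eq_zeta by blast
    hence "fibre_walsh f n j (take n w) (f x0 mod 2 ^ j) \<in> {0, 2 ^ h, - (2 ^ h)}"
      by (intro fibre_walsh_values[OF n]) (simp_all add: M_def)
    ultimately show ?thesis using walsh by (auto simp: power_add)
  qed
qed

end

theorem proposition7: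
  fixes n k :: nat and f :: "bool list \<Rightarrow> nat"
  assumes "odd n" and "k \<ge> 3"
    and "\<forall>x\<in>vecs n. f x < 2 ^ k"
    and "gbent n k f"
  shows "plateaued (n + (k - 1)) (k - 2) (gray n k f)"
proof -
  define j where "j = k - 1"
  have k: "k = Suc j" using assms(2) unfolding j_def by simp
  interpret cyclotomic_two_power j using assms(2) unfolding j_def by unfold_locales simp
  obtain h where n: "n = 2 * h + 1" using assms(1) by (elim oddE)
  have exponent: "(real (n + j) + real (k - 2)) / 2 = real (j + h)" using n k one_le_j by simp
  have pow: "2 powr ((real (n + j) + real (k - 2)) / 2) = 2 ^ (j + h)"
    unfolding exponent by (rule powr_realpow) simp
  have "walsh (n + j) (gray n k f) w \<in> {0, 2 ^ (j + h), - (2 ^ (j + h))}"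
    if "w \<in> vecs (n + j)" for w
    using walsh_gray_values[OF n _ that] assms(4) unfolding k by simp
  thus ?thesis unfolding plateaued_def j_def[symmetric] pow by force
qed

end
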